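(* Let $n\ge 1$ and let $\Pi_n=\{(u_1,\ldots,u_n)\in\mathbf{R}^n: u_i>0,\ u_i+u_{i+1}<\pi/2\ (1\le i\le n)\}$, with $u_{n+1}:=u_1$. The transformation $x_i=\frac{\sin u_i}{\cos u_{i+1}}$ ($1\le i\le n$, with $u_{n+1}:=u_1$) maps $\Pi_n$ bijectively onto the open unit cube $(0,1)^n$. *)

theory Defs
  imports "HOL-Analysis.Analysis"
begin

text \<open>Vectors in R^n are represented as functions nat => real, indexed by 0..n-1,
  and extensional: value 0 at indices >= n. Cyclic successor of index i is (i+1) mod n.\<close>

definition Pi_set :: "nat \<Rightarrow> (nat \<Rightarrow> real) set" where
  "Pi_set n = {u. (\<forall>i\<ge>n. u i = 0) \<and>
      (\<forall>i<n. u i > 0 \<and> u i + u ((i + 1) mod n) < pi / 2)}"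

definition open_cube :: "nat \<Rightarrow> (nat \<Rightarrow> real) set" where
  "open_cube n = {x. (\<forall>i\<ge>n. x i = 0) \<and> (\<forall>i<n. 0 < x i \<and> x i < 1)}"

definition sin_cos_map :: "nat \<Rightarrow> (nat \<Rightarrow> real) \<Rightarrow> (nat \<Rightarrow> real)" where
  "sin_cos_map n u = (\<lambda>i. if i < n then sin (u i) / cos (u ((i + 1) mod n)) else 0)"

end

theory Submission
  imports Defs
begin

text \<open>Put \<open>s\<^sub>i = sin\<^sup>2 u\<^sub>i\<close>. Since \<open>cos\<^sup>2 u\<^sub>i\<^sub>+\<^sub>1 = 1 - s\<^sub>i\<^sub>+\<^sub>1\<close>, the equations
  \<open>x\<^sub>i = sin u\<^sub>i / cos u\<^sub>i\<^sub>+\<^sub>1\<close> turn into the cyclic affine system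
  \<open>s\<^sub>i = x\<^sub>i\<^sup>2 (1 - s\<^sub>i\<^sub>+\<^sub>1)\<close>. Every map \<open>t \<mapsto> x\<^sub>i\<^sup>2 (1 - t)\<close> shrinks distances by
  the factor \<open>x\<^sub>i\<^sup>2 < 1\<close>, so the system has at most one solution (injectivity), and
  composing these maps once around the cycle gives a continuous self-map of \<open>[0,1]\<close>
  whose fixed point yields a solution (surjectivity). The constraints defining \<open>\<Pi>\<^sub>n\<close>
  correspond exactly to \<open>0 < s\<^sub>i\<close> and \<open>s\<^sub>i + s\<^sub>i\<^sub>+\<^sub>1 < 1\<close>, and \<open>u\<^sub>i = arcsin \<surd>s\<^sub>i\<close>
  recovers \<open>u\<close> from \<open>s\<close>.\<close>

definition solves_cyclic_system :: "nat \<Rightarrow> (nat \<Rightarrow> real) \<Rightarrow> (nat \<Rightarrow> real) \<Rightarrow> bool" where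
  "solves_cyclic_system n a s \<longleftrightarrow> (\<forall>i<n. s i = a i * (1 - s ((i + 1) mod n)))"

lemma solves_cyclic_systemD:
  "solves_cyclic_system n a s \<Longrightarrow> i < n \<Longrightarrow> s i = a i * (1 - s ((i + 1) mod n))"
  unfolding solves_cyclic_system_def by blast

lemma solves_cyclic_system_unique:
  assumes a: "\<And>i. i < n \<Longrightarrow> \<bar>a i\<bar> < 1"
    and s: "solves_cyclic_system n a s" and s': "solves_cyclic_system n a s'"
    and "i < n"
  shows "s i = s' i"
proof -
  define d where "d j = \<bar>s j - s' j\<bar>" for j
  have d_next: "d j = \<bar>a j\<bar> * d ((j + 1) mod n)" if "j < n" for j
  proof -
    have "s j - s' j = - a j * (s ((j + 1) mod n) - s' ((j + 1) mod n))"
      using solves_cyclic_systemD[OF s that] solves_cyclic_systemD[OF s' that]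
      by (simp add: algebra_simps)
    then show ?thesis
      by (simp add: d_def abs_mult)
  qed
  define M where "M = Max (d ` {..<n})"
  have "M \<in> d ` {..<n}"
    unfolding M_def using \<open>i < n\<close> by (intro Max_in) auto
  then obtain k where "k < n" and dk: "d k = M" by auto
  have d_le_M: "d j \<le> M" if "j < n" for j
    unfolding M_def using that by (intro Max_ge) auto
  have "M = \<bar>a k\<bar> * d ((k + 1) mod n)"
    using d_next[OF \<open>k < n\<close>] dk by simp
  also have "\<dots> \<le> \<bar>a k\<bar> * M"
    using d_le_M[of "(k + 1) mod n"] \<open>k < n\<close> by (intro mult_left_mono) auto
  finally have "M \<le> 0"
    using a[OF \<open>k < n\<close>] by (simp add: mult_le_cancel_right1)
  then show ?thesis
    using d_le_M[OF \<open>i < n\<close>] by (simp add: d_def)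
qed

lemma continuous_on_foldr_affine:
  fixes a :: "'i \<Rightarrow> real"
  shows "continuous_on S (\<lambda>t. foldr (\<lambda>i r. a i * (1 - r)) is t)"
  by (induction "is") (auto intro!: continuous_intros)

lemma foldr_affine_in_unit_interval:
  fixes a :: "'i \<Rightarrow> real"
  assumes "\<And>i. i \<in> set is \<Longrightarrow> 0 \<le> a i \<and> a i \<le> 1" and "0 \<le> t" "t \<le> 1"
  shows "0 \<le> foldr (\<lambda>i r. a i * (1 - r)) is t \<and> foldr (\<lambda>i r. a i * (1 - r)) is t \<le> 1"
  using assms
proof (induction "is")
  case (Cons j "is")
  define r where "r = foldr (\<lambda>i r. a i * (1 - r)) is t"
  have "0 \<le> r" "r \<le> 1" "0 \<le> a j" "a j \<le> 1"
    using Cons unfolding r_def by auto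
  then show ?case
    by (simp flip: r_def add: mult_le_one)
qed simp

lemma solves_cyclic_system_exists:
  assumes a: "\<And>i. i < n \<Longrightarrow> 0 \<le> a i \<and> a i \<le> 1"
  obtains s where "solves_cyclic_system n a s" and "\<And>i. 0 \<le> s i \<and> s i \<le> 1"
proof -
  \<comment> \<open>\<open>F k\<close> composes the maps \<open>r \<mapsto> a\<^sub>i (1 - r)\<close> for \<open>i = k, \<dots>, n - 1\<close>;
    a fixed point of \<open>F 0\<close> closes the cycle.\<close>
  define F where "F k t = foldr (\<lambda>i r. a i * (1 - r)) [k..<n] t" for k t
  have F_unit: "0 \<le> F k t \<and> F k t \<le> 1" if "0 \<le> t" "t \<le> 1" for k t
    unfolding F_def using a that by (intro foldr_affine_in_unit_interval) auto
  have "continuous_on {0..1} (\<lambda>t. F 0 t - t)"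
    unfolding F_def by (intro continuous_intros continuous_on_foldr_affine)
  moreover have "F 0 1 - 1 \<le> 0" "0 \<le> F 0 0 - 0"
    using F_unit[of 1 0] F_unit[of 0 0] by auto
  ultimately obtain t where t: "0 \<le> t" "t \<le> 1" "F 0 t = t"
    using IVT2'[of "\<lambda>t. F 0 t - t" 1 0 0] by auto
  have F_solves: "solves_cyclic_system n a (\<lambda>i. F i t)"
    unfolding solves_cyclic_system_def
  proof (intro allI impI)
    fix i assume "i < n"
    show "F i t = a i * (1 - F ((i + 1) mod n) t)"
    proof (cases "Suc i < n")
      case True
      then show ?thesis
        by (simp add: F_def upt_conv_Cons)
    next
      case False
      then have "Suc i = n" using \<open>i < n\<close> by simp
      then show ?thesis
        using t(3) by (simp add: F_def upt_conv_Cons)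
    qed
  qed
  show ?thesis
    by (rule that[OF F_solves F_unit[OF t(1,2)]])
qed

lemma solves_cyclic_system_strict_bounds:
  assumes a: "\<And>i. i < n \<Longrightarrow> 0 < a i \<and> a i < 1"
    and s: "solves_cyclic_system n a s" and s_unit: "\<And>i. 0 \<le> s i \<and> s i \<le> 1"
    and "i < n"
  shows "0 < s i" and "s i + s ((i + 1) mod n) < 1"
proof -
  let ?j = "(i + 1) mod n"
  have "?j < n" using \<open>i < n\<close> by simp
  have "s ?j = a ?j * (1 - s ((?j + 1) mod n))"
    using s \<open>?j < n\<close> by (rule solves_cyclic_systemD)
  also have "\<dots> \<le> a ?j"
    using a[OF \<open>?j < n\<close>] s_unit by (intro mult_left_le) auto
  finally have "0 < 1 - s ?j"
    using a[OF \<open>?j < n\<close>] by simp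
  then have "0 < a i * (1 - s ?j)" "a i * (1 - s ?j) < 1 - s ?j"
    using a[OF \<open>i < n\<close>] by simp_all
  moreover have "s i = a i * (1 - s ?j)"
    using s \<open>i < n\<close> by (rule solves_cyclic_systemD)
  ultimately show "0 < s i" "s i + s ?j < 1"
    by simp_all
qed

lemma sin_less_cos_iff:
  fixes x y :: real
  assumes "0 \<le> x" "x \<le> pi/2" "0 \<le> y" "y \<le> pi/2"
  shows "sin x < cos y \<longleftrightarrow> x + y < pi/2"
  using assms by (simp add: cos_sin_eq sin_mono_less_eq, linarith)

lemma Pi_set_bounds:
  assumes "u \<in> Pi_set n" "i < n"
  shows "0 < u i" "u i < pi/2"
proof -
  have "(i + 1) mod n < n" using \<open>i < n\<close> by simp
  then have "0 < u i" "0 < u ((i + 1) mod n)" "u i + u ((i + 1) mod n) < pi/2"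
    using assms unfolding Pi_set_def by blast+
  then show "0 < u i" "u i < pi/2"
    by linarith+
qed

lemma Pi_set_sin_less_cos:
  assumes "u \<in> Pi_set n" "i < n"
  shows "0 < sin (u i)" "sin (u i) < cos (u ((i + 1) mod n))"
proof -
  let ?j = "(i + 1) mod n"
  have "?j < n" using \<open>i < n\<close> by simp
  have "u i + u ?j < pi/2"
    using assms unfolding Pi_set_def by blast
  moreover note Pi_set_bounds[OF assms] Pi_set_bounds[OF \<open>u \<in> Pi_set n\<close> \<open>?j < n\<close>]
  ultimately show "0 < sin (u i)" "sin (u i) < cos (u ?j)"
    by (simp_all add: sin_gt_zero sin_less_cos_iff)
qed

lemma sin_cos_map_bounds:
  assumes "u \<in> Pi_set n" "i < n"
  shows "0 < sin_cos_map n u i" "sin_cos_map n u i < 1"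
  using Pi_set_sin_less_cos[OF assms] \<open>i < n\<close> by (simp_all add: sin_cos_map_def)

lemma sin_cos_map_in_open_cube: "u \<in> Pi_set n \<Longrightarrow> sin_cos_map n u \<in> open_cube n"
  using sin_cos_map_bounds unfolding open_cube_def by (simp add: sin_cos_map_def)

lemma sin_squared_solves_cyclic_system:
  assumes "u \<in> Pi_set n"
  shows "solves_cyclic_system n (\<lambda>i. (sin_cos_map n u i)\<^sup>2) (\<lambda>i. (sin (u i))\<^sup>2)"
  unfolding solves_cyclic_system_def
proof (intro allI impI)
  fix i assume "i < n"
  have "cos (u ((i + 1) mod n)) \<noteq> 0"
    using Pi_set_sin_less_cos[OF assms \<open>i < n\<close>] by simp
  then show "(sin (u i))\<^sup>2 = (sin_cos_map n u i)\<^sup>2 * (1 - (sin (u ((i + 1) mod n)))\<^sup>2)"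
    using \<open>i < n\<close> by (simp add: sin_cos_map_def power_divide sin_squared_eq)
qed

lemma inj_on_sin_cos_map: "inj_on (sin_cos_map n) (Pi_set n)"
proof (rule inj_onI)
  fix u v assume u: "u \<in> Pi_set n" and v: "v \<in> Pi_set n"
    and same: "sin_cos_map n u = sin_cos_map n v"
  show "u = v"
  proof
    fix i
    show "u i = v i"
    proof (cases "i < n")
      case True
      let ?a = "\<lambda>j. (sin_cos_map n u j)\<^sup>2"
      have a_bound: "\<bar>?a j\<bar> < 1" if "j < n" for j
        using sin_cos_map_bounds[OF u that] by (simp add: abs_square_less_1)
      have su: "solves_cyclic_system n ?a (\<lambda>j. (sin (u j))\<^sup>2)"
        by (rule sin_squared_solves_cyclic_system[OF u])
      have sv: "solves_cyclic_system n ?a (\<lambda>j. (sin (v j))\<^sup>2)"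
        unfolding same by (rule sin_squared_solves_cyclic_system[OF v])
      have "(sin (u i))\<^sup>2 = (sin (v i))\<^sup>2"
        using solves_cyclic_system_unique[OF a_bound su sv True] by simp
      moreover have "0 \<le> sin (u i)" "0 \<le> sin (v i)"
        using Pi_set_sin_less_cos(1)[OF u True] Pi_set_sin_less_cos(1)[OF v True] by simp_all
      ultimately have sin_eq: "sin (u i) = sin (v i)"
        by (rule power2_eq_imp_eq)
      show ?thesis
        using Pi_set_bounds[OF u True] Pi_set_bounds[OF v True]
        by (intro sin_inj_pi[OF _ _ _ _ sin_eq]) auto
    next
      case False
      then show ?thesis
        using u v unfolding Pi_set_def mem_Collect_eq not_less by metis
    qed
  qed
qed

lemma arcsin_sqrt:
  fixes s :: real
  assumes "0 < s" "s < 1"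
  shows "0 < arcsin (sqrt s)" "arcsin (sqrt s) < pi/2"
    and "sin (arcsin (sqrt s)) = sqrt s" "cos (arcsin (sqrt s)) = sqrt (1 - s)"
proof -
  have "0 < sqrt s" "sqrt s < 1" using assms by auto
  then have "-1 < sqrt s" by linarith
  show "0 < arcsin (sqrt s)"
    using arcsin_less_arcsin[of 0 "sqrt s"] assms by simp
  show "arcsin (sqrt s) < pi/2"
    using arcsin_lt_bounded[OF \<open>-1 < sqrt s\<close> \<open>sqrt s < 1\<close>] by simp
  show "sin (arcsin (sqrt s)) = sqrt s"
    using \<open>-1 < sqrt s\<close> \<open>sqrt s < 1\<close> by (intro sin_arcsin) auto
  have "cos (arcsin (sqrt s)) = sqrt (1 - (sqrt s)\<^sup>2)"
    using \<open>-1 < sqrt s\<close> \<open>sqrt s < 1\<close> by (intro cos_arcsin) auto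
  then show "cos (arcsin (sqrt s)) = sqrt (1 - s)"
    using assms by simp
qed

lemma arcsin_sqrt_in_Pi_set:
  assumes s_pos: "\<And>i. i < n \<Longrightarrow> 0 < s i"
    and s_sum: "\<And>i. i < n \<Longrightarrow> s i + s ((i + 1) mod n) < 1"
  shows "(\<lambda>i. if i < n then arcsin (sqrt (s i)) else 0) \<in> Pi_set n" (is "?u \<in> _")
  unfolding Pi_set_def mem_Collect_eq
proof (intro conjI allI impI)
  fix i assume "i < n"
  let ?j = "(i + 1) mod n"
  have "?j < n" using \<open>i < n\<close> by simp
  have s_less_1: "s k < 1" if "k < n" for k
    using s_sum[OF that] s_pos[of "(k + 1) mod n"] that by simp
  note u_i = arcsin_sqrt[OF s_pos[OF \<open>i < n\<close>] s_less_1[OF \<open>i < n\<close>]]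
  note u_j = arcsin_sqrt[OF s_pos[OF \<open>?j < n\<close>] s_less_1[OF \<open>?j < n\<close>]]
  show "0 < ?u i"
    using u_i(1) \<open>i < n\<close> by simp
  have "sqrt (s i) < sqrt (1 - s ?j)"
    using s_sum[OF \<open>i < n\<close>] by simp
  then have "sin (?u i) < cos (?u ?j)"
    using u_i(3) u_j(4) \<open>i < n\<close> \<open>?j < n\<close> by simp
  then show "?u i + ?u ?j < pi/2"
    using u_i(1,2) u_j(1,2) \<open>i < n\<close> \<open>?j < n\<close> by (subst (asm) sin_less_cos_iff) auto
qed simp

lemma sin_cos_map_arcsin_sqrt:
  assumes x: "x \<in> open_cube n"
    and s: "solves_cyclic_system n (\<lambda>i. (x i)\<^sup>2) s"
    and s_pos: "\<And>i. i < n \<Longrightarrow> 0 < s i"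
    and s_sum: "\<And>i. i < n \<Longrightarrow> s i + s ((i + 1) mod n) < 1"
  shows "sin_cos_map n (\<lambda>i. if i < n then arcsin (sqrt (s i)) else 0) = x" (is "sin_cos_map n ?u = x")
proof
  fix i
  show "sin_cos_map n ?u i = x i"
  proof (cases "i < n")
    case True
    let ?j = "(i + 1) mod n"
    have "?j < n" using True by simp
    have "0 < 1 - s ?j" "s i < 1"
      using s_sum[OF True] s_pos[OF True] s_pos[OF \<open>?j < n\<close>] by simp_all
    have "sin_cos_map n ?u i = sqrt (s i) / sqrt (1 - s ?j)"
      using True \<open>?j < n\<close> s_pos[OF True] \<open>s i < 1\<close> s_pos[OF \<open>?j < n\<close>] \<open>0 < 1 - s ?j\<close>
      by (simp add: sin_cos_map_def arcsin_sqrt)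
    also have "\<dots> = sqrt (s i / (1 - s ?j))"
      by (simp add: real_sqrt_divide)
    also have "s i / (1 - s ?j) = (x i)\<^sup>2"
      using solves_cyclic_systemD[OF s True] \<open>0 < 1 - s ?j\<close> by simp
    finally have "sin_cos_map n ?u i = sqrt ((x i)\<^sup>2)" .
    moreover have "0 < x i"
      using x True by (simp add: open_cube_def)
    ultimately show ?thesis
      by simp
  next
    case False
    then show ?thesis
      using x by (simp add: sin_cos_map_def open_cube_def)
  qed
qed

lemma open_cube_subset_image: "open_cube n \<subseteq> sin_cos_map n ` Pi_set n"
proof
  fix x assume x: "x \<in> open_cube n"
  define a where "a i = (x i)\<^sup>2" for i
  have a_bounds: "0 < a i \<and> a i < 1" if "i < n" for i
  proof -
    have "0 < x i" "x i < 1"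
      using x that by (simp_all add: open_cube_def)
    then show ?thesis
      by (simp add: a_def abs_square_less_1)
  qed
  then have "0 \<le> a i \<and> a i \<le> 1" if "i < n" for i
    using that by (simp add: less_imp_le)
  then obtain s where s: "solves_cyclic_system n a s" and s_unit: "\<And>i. 0 \<le> s i \<and> s i \<le> 1"
    using solves_cyclic_system_exists[of n a] by blast
  have s_pos: "0 < s i" and s_sum: "s i + s ((i + 1) mod n) < 1" if "i < n" for i
    using solves_cyclic_system_strict_bounds[of n a s i] a_bounds s s_unit that by blast+
  let ?u = "\<lambda>i. if i < n then arcsin (sqrt (s i)) else 0"
  have "?u \<in> Pi_set n"
    using s_pos s_sum by (rule arcsin_sqrt_in_Pi_set)
  moreover have "sin_cos_map n ?u = x"
    using x s[unfolded a_def] s_pos s_sum by (rule sin_cos_map_arcsin_sqrt)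
  ultimately show "x \<in> sin_cos_map n ` Pi_set n"
    by blast
qed

theorem lemma2:
  fixes n :: nat
  assumes "n \<ge> 1"
  shows "bij_betw (sin_cos_map n) (Pi_set n) (open_cube n)"
proof (rule bij_betw_imageI)
  show "inj_on (sin_cos_map n) (Pi_set n)"
    by (rule inj_on_sin_cos_map)
  show "sin_cos_map n ` Pi_set n = open_cube n"
    using sin_cos_map_in_open_cube open_cube_subset_image by blast
qed

end
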